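(* Let $C$ be a triangulation of $\mathbb{S}^3$ whose $1$-skeleton has a proper $5$-colouring. Then $C$ has a proper face-colouring with five colours. On the other hand, there exists a triangulation of $\mathbb{S}^3$ that has no proper $4$-face-colouring but whose $1$-skeleton has a proper $5$-colouring.
   Context: A triangulation of $\mathbb{S}^3$ is a simplicial $2$-complex embedded in $\mathbb{S}^3$ such that every chamber (connected component of its complement) is a tetrahedron. Faces are $2$-cells. A face-colouring is proper if for every chamber, any two distinct faces on the boundary of that chamber receive different colours. *)

theory Defs
  imports "HOL-Analysis.Analysis"
begin

text \<open>A finite geometric simplicial 2-complex, realised in real^5 (every finite
  simplicial 2-complex has a linear realisation there).\<close>
definition simplicial_2_complex :: "(real^5) set set \<Rightarrow> bool" where
  "simplicial_2_complex K \<longleftrightarrow> simplicial_complex K \<and> (\<forall>S\<in>K. \<exists>n. n \<le> 2 \<and> n simplex S)"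

definition cvertices :: "(real^5) set set \<Rightarrow> (real^5) set" where
  "cvertices K = {v. {v} \<in> K}"

definition cedges :: "(real^5) set set \<Rightarrow> (real^5) set set" where
  "cedges K = {S \<in> K. 1 simplex S}"

definition cfaces :: "(real^5) set set \<Rightarrow> (real^5) set set" where
  "cfaces K = {S \<in> K. 2 simplex S}"

abbreviation S3 :: "(real^4) set" where
  "S3 \<equiv> sphere 0 1"

definition chambers :: "(real^5) set set \<Rightarrow> (real^5 \<Rightarrow> real^4) \<Rightarrow> (real^4) set set" where
  "chambers K f = components (S3 - f ` \<Union>K)"

text \<open>Boundary of a chamber (relative to the sphere; the sphere is closed).\<close>
definition chamber_boundary :: "(real^4) set \<Rightarrow> (real^4) set" where
  "chamber_boundary U = closure U - U"

definition face_on_boundary :: "(real^5 \<Rightarrow> real^4) \<Rightarrow> (real^5) set \<Rightarrow> (real^4) set \<Rightarrow> bool" where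
  "face_on_boundary f T U \<longleftrightarrow> f ` T \<subseteq> chamber_boundary U"

definition tetrahedral_chamber :: "(real^5) set set \<Rightarrow> (real^5 \<Rightarrow> real^4) \<Rightarrow> (real^4) set \<Rightarrow> bool" where
  "tetrahedral_chamber K f U \<longleftrightarrow>
     (\<exists>a b c d. card {a, b, c, d} = 4 \<and>
        convex hull {a, b, c} \<in> K \<and> convex hull {a, b, d} \<in> K \<and>
        convex hull {a, c, d} \<in> K \<and> convex hull {b, c, d} \<in> K \<and>
        chamber_boundary U = f ` (convex hull {a, b, c} \<union> convex hull {a, b, d} \<union>
                                  convex hull {a, c, d} \<union> convex hull {b, c, d})) \<and>
     closure U homeomorphic cball (0::real^3) 1"

definition triangulation_S3 :: "(real^5) set set \<Rightarrow> (real^5 \<Rightarrow> real^4) \<Rightarrow> bool" where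
  "triangulation_S3 K f \<longleftrightarrow>
     simplicial_2_complex K \<and>
     continuous_on (\<Union>K) f \<and> inj_on f (\<Union>K) \<and> f ` (\<Union>K) \<subseteq> S3 \<and>
     (\<forall>U \<in> chambers K f. tetrahedral_chamber K f U)"

definition proper_vertex_colouring :: "(real^5) set set \<Rightarrow> nat \<Rightarrow> (real^5 \<Rightarrow> nat) \<Rightarrow> bool" where
  "proper_vertex_colouring K k c \<longleftrightarrow>
     (\<forall>v \<in> cvertices K. c v < k) \<and>
     (\<forall>u \<in> cvertices K. \<forall>v \<in> cvertices K. u \<noteq> v \<and> closed_segment u v \<in> cedges K \<longrightarrow> c u \<noteq> c v)"

definition proper_face_colouring :: "(real^5) set set \<Rightarrow> (real^5 \<Rightarrow> real^4) \<Rightarrow> nat \<Rightarrow> ((real^5) set \<Rightarrow> nat) \<Rightarrow> bool" where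
  "proper_face_colouring K f k col \<longleftrightarrow>
     (\<forall>T \<in> cfaces K. col T < k) \<and>
     (\<forall>U \<in> chambers K f. \<forall>T \<in> cfaces K. \<forall>T' \<in> cfaces K.
        T \<noteq> T' \<and> face_on_boundary f T U \<and> face_on_boundary f T' U \<longrightarrow> col T \<noteq> col T')"

end

theory Submission
  imports Defs "HOL-Library.Z2" "HOL-Library.Disjoint_Sets"
begin

(* Colour a face by the sum of the colours of its three vertices, modulo 5. Two distinct faces
   on the boundary of a tetrahedral chamber with vertex set V are V - {u} and V - {w}, so their
   sums differ by c u - c w; as u w is an edge of the complex, c u and c w differ and so do the
   sums modulo 5.

   For the second part, radially project the boundary of the 4-simplex from its barycentre onto
   S^3. The image of the 2-skeleton is a triangulation whose chambers are the five facets, and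
   its 1-skeleton K5 is properly 5-coloured by giving each vertex its own colour. Indexing each
   triangle by the pair of vertices it misses, two triangles bound a common chamber iff their
   pairs meet, so a proper face colouring is a proper edge colouring of K5. With four colours
   every colour would appear at each of the five vertices, making each colour class a perfect
   matching of an odd number of vertices. *)

section \<open>Cells and tetrahedral chambers\<close>

lemma affine_independent_if_simplex_convex_hull:
  fixes A :: "'a::euclidean_space set"
  assumes "n simplex (convex hull A)" "finite A" "int (card A) \<le> n + 1"
  shows "\<not> affine_dependent A"
proof -
  obtain C where C: "\<not> affine_dependent C" "int (card C) = n + 1"
      and hull: "convex hull A = convex hull C"
    using assms(1) unfolding simplex by metis
  have "C \<subseteq> A"
  proof
    fix v assume "v \<in> C"
    then have "v extreme_point_of convex hull A"
      using C(1) hull extreme_point_of_convex_hull_affine_independent by metis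
    then show "v \<in> A" by (rule extreme_point_of_convex_hull)
  qed
  moreover have "card A \<le> card C" using assms(3) C(2) by linarith
  ultimately have "C = A" using card_seteq[OF assms(2)] by blast
  then show ?thesis using C(1) by simp
qed

lemma simplicial_complex_convex_hull_subset:
  assumes "simplicial_complex K" "convex hull A \<in> K" "\<not> affine_dependent A" "B \<subseteq> A"
  shows "convex hull B \<in> K"
proof -
  have "convex hull B face_of convex hull A"
    using assms(3,4) face_of_convex_hull_affine_independent by blast
  then show ?thesis using assms(1,2) unfolding simplicial_complex_def by blast
qed

lemma vertex_of_independent_cell:
  assumes "simplicial_complex K" "convex hull A \<in> K" "\<not> affine_dependent A" "u \<in> A"
  shows "u \<in> cvertices K"
  using simplicial_complex_convex_hull_subset[OF assms(1-3), of "{u}"] assms(4)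
  by (simp add: cvertices_def)

lemma edge_of_independent_cell:
  assumes "simplicial_complex K" "convex hull A \<in> K" "\<not> affine_dependent A"
    and "u \<in> A" "w \<in> A" "u \<noteq> w"
  shows "closed_segment u w \<in> cedges K"
proof -
  have "closed_segment u w \<in> K"
    unfolding segment_convex_hull
    using simplicial_complex_convex_hull_subset[OF assms(1-3), of "{u,w}"] assms(4,5) by simp
  then show ?thesis using one_simplex_segment[OF assms(6)] by (simp add: cedges_def)
qed

lemma maximal_cell_mem_cover:
  assumes K: "simplicial_complex K" and T: "T \<in> K" "T \<noteq> {}"
    and max: "\<And>S. S \<in> K \<Longrightarrow> aff_dim S \<le> aff_dim T"
    and H: "H \<subseteq> K" "T \<subseteq> \<Union>H"
  shows "T \<in> H"
proof -
  have convex: "convex S" if "S \<in> K" for S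
    using K that convex_simplex unfolding simplicial_complex_def by metis
  have "rel_interior T \<noteq> {}"
    using T convex by (simp add: rel_interior_eq_empty)
  then obtain x where x: "x \<in> rel_interior T"
    by blast
  then obtain S where S: "S \<in> H" "x \<in> S"
    using H rel_interior_subset by blast
  have "S \<in> K" using S(1) H(1) by blast
  then have faces: "(T \<inter> S) face_of T" "(S \<inter> T) face_of S"
    using K T(1) unfolding simplicial_complex_def by blast+
  have "T \<inter> S = T"
  proof (rule ccontr)
    assume "T \<inter> S \<noteq> T"
    then have "T \<inter> S \<inter> rel_interior T = {}"
      by (rule face_of_disjoint_rel_interior[OF faces(1)])
    then show False using x S(2) rel_interior_subset by blast
  qed
  then have "T face_of S" using faces(2) by (simp add: Int_commute)
  have "T = S"
  proof (rule ccontr)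
    assume "T \<noteq> S"
    then have "aff_dim T < aff_dim S"
      using face_of_aff_dim_lt convex \<open>S \<in> K\<close> \<open>T face_of S\<close> by blast
    then show False using max \<open>S \<in> K\<close> by fastforce
  qed
  then show ?thesis using S(1) by simp
qed

lemma card_4_iff: "card S = 4 \<longleftrightarrow> (\<exists>a b c d. S = {a, b, c, d} \<and> distinct [a, b, c, d])"
proof
  assume "card S = 4"
  then show "\<exists>a b c d. S = {a, b, c, d} \<and> distinct [a, b, c, d]"
    by (auto simp: card_Suc_eq numeral_eq_Suc)
next
  assume "\<exists>a b c d. S = {a, b, c, d} \<and> distinct [a, b, c, d]"
  then show "card S = 4" by (auto simp: card_insert_if)
qed

lemma facets_of_four:
  assumes "distinct [a, b, c, d]"
  shows "(\<forall>v\<in>{a, b, c, d}. P ({a, b, c, d} - {v})) \<longleftrightarrow>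
           P {a, b, c} \<and> P {a, b, d} \<and> P {a, c, d} \<and> P {b, c, d}"
    and "(\<Union>v\<in>{a, b, c, d}. g ({a, b, c, d} - {v})) =
           g {a, b, c} \<union> g {a, b, d} \<union> g {a, c, d} \<union> g {b, c, d}"
proof -
  have eqs: "{a, b, c, d} - {d} = {a, b, c}" "{a, b, c, d} - {c} = {a, b, d}"
    "{a, b, c, d} - {b} = {a, c, d}" "{a, b, c, d} - {a} = {b, c, d}"
    using assms by auto
  show "(\<forall>v\<in>{a, b, c, d}. P ({a, b, c, d} - {v})) \<longleftrightarrow>
           P {a, b, c} \<and> P {a, b, d} \<and> P {a, c, d} \<and> P {b, c, d}"
    by (simp only: ball_simps(5,7) eqs) blast
  show "(\<Union>v\<in>{a, b, c, d}. g ({a, b, c, d} - {v})) =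
           g {a, b, c} \<union> g {a, b, d} \<union> g {a, c, d} \<union> g {b, c, d}"
    by (simp only: UN_insert image_empty Union_empty Un_empty_right eqs) (simp only: Un_ac)
qed

lemma tetrahedral_chamber_iff:
  "tetrahedral_chamber K f U \<longleftrightarrow>
     (\<exists>V. card V = 4 \<and> (\<forall>v\<in>V. convex hull (V - {v}) \<in> K) \<and>
          chamber_boundary U = f ` (\<Union>v\<in>V. convex hull (V - {v}))) \<and>
     closure U homeomorphic cball (0::real^3) 1"
proof -
  have card4: "card {a, b, c, d} = 4 \<longleftrightarrow> distinct [a, b, c, d]" for a b c d :: 'a
  proof
    assume "card {a, b, c, d} = 4"
    then show "distinct [a, b, c, d]" by (intro card_distinct) simp
  next
    assume "distinct [a, b, c, d]"
    then show "card {a, b, c, d} = 4" by (simp add: card_insert_if)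
  qed
  note facets = facets_of_four(1)[where P = "\<lambda>S. convex hull S \<in> K"]
    facets_of_four(2)[where g = "\<lambda>S. convex hull S"]
  show ?thesis
  proof
    assume "tetrahedral_chamber K f U"
    then obtain a b c d where "distinct [a, b, c, d]"
      "convex hull {a, b, c} \<in> K" "convex hull {a, b, d} \<in> K"
      "convex hull {a, c, d} \<in> K" "convex hull {b, c, d} \<in> K"
      "chamber_boundary U = f ` (convex hull {a, b, c} \<union> convex hull {a, b, d} \<union>
                                 convex hull {a, c, d} \<union> convex hull {b, c, d})"
      "closure U homeomorphic cball (0::real^3) 1"
      unfolding tetrahedral_chamber_def card4 by blast
    then show "(\<exists>V. card V = 4 \<and> (\<forall>v\<in>V. convex hull (V - {v}) \<in> K) \<and>
          chamber_boundary U = f ` (\<Union>v\<in>V. convex hull (V - {v}))) \<and>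
        closure U homeomorphic cball (0::real^3) 1"
      by (intro conjI exI[of _ "{a, b, c, d}"]) (simp_all only: card4 facets)
  next
    assume "(\<exists>V. card V = 4 \<and> (\<forall>v\<in>V. convex hull (V - {v}) \<in> K) \<and>
          chamber_boundary U = f ` (\<Union>v\<in>V. convex hull (V - {v}))) \<and>
        closure U homeomorphic cball (0::real^3) 1"
    then obtain a b c d where "distinct [a, b, c, d]"
      "\<forall>v\<in>{a, b, c, d}. convex hull ({a, b, c, d} - {v}) \<in> K"
      "chamber_boundary U = f ` (\<Union>v\<in>{a, b, c, d}. convex hull ({a, b, c, d} - {v}))"
      "closure U homeomorphic cball (0::real^3) 1"
      unfolding card_4_iff by blast
    then show "tetrahedral_chamber K f U"
      unfolding tetrahedral_chamber_def
      by (intro conjI exI[of _ a] exI[of _ b] exI[of _ c] exI[of _ d]) (simp_all only: card4 facets)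
  qed
qed

lemma triangulation_chamber_facets:
  assumes tri: "triangulation_S3 K f" and U: "U \<in> chambers K f"
  obtains V where "card V = 4" "\<And>v. v \<in> V \<Longrightarrow> convex hull (V - {v}) \<in> K"
    "\<And>T. T \<in> cfaces K \<Longrightarrow> face_on_boundary f T U \<Longrightarrow> \<exists>v\<in>V. T = convex hull (V - {v})"
proof -
  have K: "simplicial_complex K" and dim: "\<And>S. S \<in> K \<Longrightarrow> \<exists>n. n \<le> 2 \<and> n simplex S"
    and inj: "inj_on f (\<Union>K)"
    using tri unfolding triangulation_S3_def simplicial_2_complex_def by blast+
  obtain V where V: "card V = 4" "\<And>v. v \<in> V \<Longrightarrow> convex hull (V - {v}) \<in> K"
    and boundary: "chamber_boundary U = f ` (\<Union>v\<in>V. convex hull (V - {v}))"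
    using tri U unfolding triangulation_S3_def tetrahedral_chamber_iff by metis
  define H where "H = (\<lambda>v. convex hull (V - {v})) ` V"
  have H: "H \<subseteq> K" using V(2) by (auto simp: H_def)
  have facet: "T \<in> H" if T: "T \<in> cfaces K" "face_on_boundary f T U" for T
  proof (rule maximal_cell_mem_cover[OF K])
    have simplex: "T \<in> K" "2 simplex T" using T(1) by (auto simp: cfaces_def)
    then show "T \<in> K" "T \<noteq> {}" by auto
    show "aff_dim S \<le> aff_dim T" if S: "S \<in> K" for S
    proof -
      obtain n where "n \<le> 2" "n simplex S" using dim[OF S] by blast
      then show ?thesis using simplex(2) by (simp add: aff_dim_simplex)
    qed
    show "H \<subseteq> K" by (rule H)
    have "f ` T \<subseteq> f ` \<Union>H"
      using T(2) unfolding face_on_boundary_def boundary H_def by simp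
    then show "T \<subseteq> \<Union>H"
      using inj_on_image_subset_iff[OF inj] H simplex(1) by blast
  qed
  show ?thesis
  proof (rule that[OF V])
    show "\<exists>v\<in>V. T = convex hull (V - {v})" if "T \<in> cfaces K" "face_on_boundary f T U" for T
      using facet[OF that] by (auto simp: H_def)
  qed
qed

text \<open>The facets of a tetrahedral chamber need not be 2-simplices. The edge \<open>u w\<close> lies in the two
  facets missing the other two vertices; if both were degenerate, all four vertices would be
  collinear.\<close>

lemma tetrahedron_edge:
  assumes K: "simplicial_complex K"
    and V: "card V = 4" "\<And>v. v \<in> V \<Longrightarrow> convex hull (V - {v}) \<in> K"
    and uw: "u \<in> V" "w \<in> V" "u \<noteq> w"
    and indep: "\<not> affine_dependent (V - {u})"
  shows "closed_segment u w \<in> cedges K"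
proof -
  have "finite V" using V(1) by (metis card.infinite zero_neq_numeral)
  then have "card (V - {u, w}) = 2" using V(1) uw by (simp add: card_Diff_subset)
  then obtain p q where pq: "V - {u, w} = {p, q}" "p \<noteq> q" by (auto simp: card_2_iff)
  then have distinct: "p \<noteq> u" "p \<noteq> w" "q \<noteq> u" "q \<noteq> w" and "p \<in> V" "q \<in> V" by auto
  have facets: "V - {p} = {q, u, w}" "V - {q} = {p, u, w}" "V - {u} = {p, q, w}"
    using pq uw distinct by auto
  show ?thesis
  proof (cases "affine_dependent {q, u, w}")
    case False
    then show ?thesis
      using edge_of_independent_cell[OF K V(2)[OF \<open>p \<in> V\<close>], of u w] facets(1) uw(3) by simp
  next
    case dependent_q: True
    show ?thesis
    proof (cases "affine_dependent {p, u, w}")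
      case False
      then show ?thesis
        using edge_of_independent_cell[OF K V(2)[OF \<open>q \<in> V\<close>], of u w] facets(2) uw(3) by simp
    next
      case True
      have "collinear {p, w, u}" "collinear {w, u, q}"
        using True dependent_q affine_dependent_imp_collinear_3 by (simp_all add: insert_commute)
      then have "collinear {p, w, q}" using collinear_3_trans uw(3) by blast
      then have "affine_dependent {p, q, w}"
        using pq(2) distinct by (simp add: insert_commute collinear_3_eq_affine_dependent)
      then show ?thesis using indep facets(3) by simp
    qed
  qed
qed

section \<open>Face colourings from vertex colourings\<close>

lemma sum_remove_mod_neq:
  fixes c :: "'a \<Rightarrow> nat"
  assumes "finite V" "u \<in> V" "w \<in> V" "c u < k" "c w < k" "c u \<noteq> c w"
  shows "(\<Sum>v\<in>V - {u}. c v) mod k \<noteq> (\<Sum>v\<in>V - {w}. c v) mod k"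
proof
  assume "(\<Sum>v\<in>V - {u}. c v) mod k = (\<Sum>v\<in>V - {w}. c v) mod k"
  then obtain q q' where q: "(\<Sum>v\<in>V - {u}. c v) + k * q = (\<Sum>v\<in>V - {w}. c v) + k * q'"
    unfolding nat_mod_eq_iff by blast
  have "c u + (\<Sum>v\<in>V - {u}. c v) = c w + (\<Sum>v\<in>V - {w}. c v)"
    using assms(1-3) by (simp add: sum.remove[symmetric])
  then have "c u + k * q' = c w + k * q" using q by linarith
  then have "c u mod k = c w mod k" unfolding nat_mod_eq_iff by blast
  then show False using assms(4-6) by simp
qed

definition vertex_sum_colouring :: "nat \<Rightarrow> ('a::real_vector \<Rightarrow> nat) \<Rightarrow> 'a set \<Rightarrow> nat" where
  "vertex_sum_colouring k c T = (\<Sum>v | v extreme_point_of T. c v) mod k"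

lemma vertex_sum_colouring_convex_hull:
  fixes A :: "'a::euclidean_space set"
  assumes "\<not> affine_dependent A"
  shows "vertex_sum_colouring k c (convex hull A) = (\<Sum>v\<in>A. c v) mod k"
  using extreme_point_of_convex_hull_affine_independent[OF assms]
  by (simp add: vertex_sum_colouring_def)

lemma vertex_sum_colouring_facets_neq:
  assumes K: "simplicial_complex K" and c: "proper_vertex_colouring K k c"
    and V: "card V = 4" "\<And>v. v \<in> V \<Longrightarrow> convex hull (V - {v}) \<in> K"
    and uw: "u \<in> V" "w \<in> V" "u \<noteq> w"
    and simplices: "2 simplex (convex hull (V - {u}))" "2 simplex (convex hull (V - {w}))"
  shows "vertex_sum_colouring k c (convex hull (V - {u})) \<noteq>
         vertex_sum_colouring k c (convex hull (V - {w}))"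
proof -
  have fin: "finite V" using V(1) by (metis card.infinite zero_neq_numeral)
  have indep: "\<not> affine_dependent (V - {v})" if "v \<in> V" "2 simplex (convex hull (V - {v}))" for v
    using affine_independent_if_simplex_convex_hull[OF that(2)] fin V(1) that(1) by simp
  have indep_u: "\<not> affine_dependent (V - {u})" and indep_w: "\<not> affine_dependent (V - {w})"
    using indep uw simplices by blast+
  have "u \<in> cvertices K" "w \<in> cvertices K"
    using vertex_of_independent_cell[OF K V(2) indep_w] vertex_of_independent_cell[OF K V(2) indep_u] uw
    by auto
  moreover have "closed_segment u w \<in> cedges K" by (rule tetrahedron_edge[OF K V uw indep_u])
  ultimately have "c u \<noteq> c w" "c u < k" "c w < k"
    using c uw(3) unfolding proper_vertex_colouring_def by blast+
  then show ?thesis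
    using sum_remove_mod_neq[OF fin uw(1,2)] by (simp add: vertex_sum_colouring_convex_hull indep_u indep_w)
qed

lemma proper_face_colouring_vertex_sum:
  assumes "0 < k" and tri: "triangulation_S3 K f" and c: "proper_vertex_colouring K k c"
  shows "proper_face_colouring K f k (vertex_sum_colouring k c)"
  unfolding proper_face_colouring_def
proof (intro conjI ballI impI)
  show "vertex_sum_colouring k c T < k" for T
    using \<open>0 < k\<close> by (simp add: vertex_sum_colouring_def)
next
  fix U T T' assume U: "U \<in> chambers K f" and T: "T \<in> cfaces K" "T' \<in> cfaces K"
    and TT': "T \<noteq> T' \<and> face_on_boundary f T U \<and> face_on_boundary f T' U"
  have K: "simplicial_complex K"
    using tri by (simp add: triangulation_S3_def simplicial_2_complex_def)
  obtain V where V: "card V = 4" "\<And>v. v \<in> V \<Longrightarrow> convex hull (V - {v}) \<in> K"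
    and facet: "\<And>T. T \<in> cfaces K \<Longrightarrow> face_on_boundary f T U \<Longrightarrow> \<exists>v\<in>V. T = convex hull (V - {v})"
    using triangulation_chamber_facets[OF tri U] by metis
  obtain u w where u: "u \<in> V" "T = convex hull (V - {u})" and w: "w \<in> V" "T' = convex hull (V - {w})"
    using facet T TT' by meson
  have "u \<noteq> w" using TT' u w by blast
  moreover have "2 simplex T" "2 simplex T'" using T by (simp_all add: cfaces_def)
  ultimately show "vertex_sum_colouring k c T \<noteq> vertex_sum_colouring k c T'"
    using vertex_sum_colouring_facets_neq[OF K c V u(1) w(1)] u(2) w(2) by blast
qed

section \<open>The 2-skeleton of the 4-simplex\<close>

lemma card_Compl_finite: "card (- A :: 'a::finite set) = CARD('a) - card A"
  by (metis Compl_eq_Diff_UNIV card_Diff_subset finite subset_UNIV)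

definition std_vertex :: "5 \<Rightarrow> real^5" where
  "std_vertex i = axis i 1"

definition std_simplex :: "(real^5) set" where
  "std_simplex = {x. (\<forall>i. 0 \<le> x$i) \<and> (\<Sum>i\<in>UNIV. x$i) = 1}"

definition two_skeleton :: "(real^5) set set" where
  "two_skeleton = {convex hull (std_vertex ` I) | I. card I \<le> 3}"

lemma inj_std_vertex: "inj std_vertex"
  by (auto simp: inj_def std_vertex_def axis_eq_axis)

lemma std_vertex_nth: "std_vertex i $ k = (if k = i then 1 else 0)"
  by (simp add: std_vertex_def axis_def)

lemma card_std_vertices: "card (std_vertex ` I) = card I"
  using inj_std_vertex by (simp add: card_image inj_on_def inj_def)

lemma affine_independent_std_vertices: "\<not> affine_dependent (std_vertex ` I)"
proof -
  have "std_vertex ` I \<subseteq> Basis" by (auto simp: std_vertex_def Basis_vec_def)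
  then have "independent (std_vertex ` I)" using independent_Basis independent_mono by blast
  then show ?thesis using affine_dependent_imp_dependent by blast
qed

lemma convex_hull_std_vertices:
  "convex hull (std_vertex ` I) = {x \<in> std_simplex. \<forall>i. i \<notin> I \<longrightarrow> x$i = 0}"
proof -
  have inj: "inj_on std_vertex I" using inj_std_vertex by (auto simp: inj_on_def inj_def)
  have nth: "(\<Sum>i\<in>I. a i *\<^sub>R std_vertex i) $ k = (if k \<in> I then a k else 0)" for a k
    by (simp add: std_vertex_nth if_distrib[of "\<lambda>t. _ * t"] sum.delta cong: if_cong)
  show ?thesis
  proof (rule set_eqI, rule iffI)
    fix y assume "y \<in> convex hull (std_vertex ` I)"
    then obtain u where u: "\<forall>x\<in>std_vertex ` I. 0 \<le> u x" "sum u (std_vertex ` I) = 1"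
        "(\<Sum>x\<in>std_vertex ` I. u x *\<^sub>R x) = y"
      unfolding convex_hull_finite[OF finite_imageI[OF finite]] by blast
    have y_eq: "y = (\<Sum>i\<in>I. u (std_vertex i) *\<^sub>R std_vertex i)"
      using u(3) sum.reindex[OF inj, of "\<lambda>v. u v *\<^sub>R v"] by (simp add: comp_def)
    have y: "y $ k = (if k \<in> I then u (std_vertex k) else 0)" for k
      unfolding y_eq by (rule nth)
    have "(\<Sum>i\<in>I. u (std_vertex i)) = 1" using u(2) sum.reindex[OF inj, of u] by (simp add: comp_def)
    moreover have "(\<Sum>k\<in>UNIV. y$k) = (\<Sum>i\<in>I. u (std_vertex i))"
      by (simp add: y sum.If_cases)
    ultimately show "y \<in> {x \<in> std_simplex. \<forall>i. i \<notin> I \<longrightarrow> x$i = 0}"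
      using u(1) y by (auto simp: std_simplex_def)
  next
    fix x assume x: "x \<in> {x \<in> std_simplex. \<forall>i. i \<notin> I \<longrightarrow> x$i = 0}"
    define u where "u v = inner v x" for v
    have u: "u (std_vertex i) = x $ i" for i by (simp add: u_def std_vertex_def inner_axis')
    have "(\<Sum>k\<in>UNIV. x$k) = (\<Sum>k\<in>I. x$k)"
      using x by (intro sum.mono_neutral_right) auto
    then have "sum u (std_vertex ` I) = 1"
      using x sum.reindex[OF inj, of u] by (simp add: comp_def u std_simplex_def)
    moreover have "(\<Sum>v\<in>std_vertex ` I. u v *\<^sub>R v) = x"
    proof -
      have "(\<Sum>v\<in>std_vertex ` I. u v *\<^sub>R v) = (\<Sum>i\<in>I. x$i *\<^sub>R std_vertex i)"
        using sum.reindex[OF inj, of "\<lambda>v. u v *\<^sub>R v"] by (simp add: comp_def u)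
      also have "\<dots> = x" using x by (simp add: vec_eq_iff nth del: sum_component)
      finally show ?thesis .
    qed
    moreover have "\<forall>v\<in>std_vertex ` I. 0 \<le> u v" using x by (auto simp: u std_simplex_def)
    ultimately show "x \<in> convex hull (std_vertex ` I)"
      unfolding convex_hull_finite[OF finite_imageI[OF finite]] by blast
  qed
qed

lemma simplex_convex_hull_std_vertices:
  "(int (card I) - 1) simplex (convex hull (std_vertex ` I))"
  using affine_independent_std_vertices card_std_vertices by (intro simplex_convex_hull) simp

lemma simplicial_2_complex_two_skeleton: "simplicial_2_complex two_skeleton"
  unfolding simplicial_2_complex_def simplicial_complex_def
proof (intro conjI ballI allI impI)
  have "two_skeleton = (\<lambda>I. convex hull (std_vertex ` I)) ` {I. card I \<le> 3}"
    by (auto simp: two_skeleton_def)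
  then show "finite two_skeleton" by (metis finite finite_imageI)
next
  fix S assume "S \<in> two_skeleton"
  then obtain I where "S = convex hull (std_vertex ` I)" "card I \<le> 3"
    by (auto simp: two_skeleton_def)
  then show "\<exists>n. n simplex S" "\<exists>n. n \<le> 2 \<and> n simplex S"
    using simplex_convex_hull_std_vertices[of I] by (auto intro!: exI[of _ "int (card I) - 1"])
next
  fix F S assume "S \<in> two_skeleton \<and> F face_of S"
  then obtain I where I: "card I \<le> 3" "F face_of convex hull (std_vertex ` I)"
    by (auto simp: two_skeleton_def)
  then obtain J where "J \<subseteq> I" "F = convex hull (std_vertex ` J)"
    using face_of_convex_hull_affine_independent[OF affine_independent_std_vertices]
    by (auto simp: subset_image_iff)
  moreover have "card J \<le> 3" using calculation(1) I(1) card_mono[of I J] by simp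
  ultimately show "F \<in> two_skeleton" by (auto simp: two_skeleton_def)
next
  fix S S' assume "S \<in> two_skeleton \<and> S' \<in> two_skeleton"
  then obtain I J where IJ: "S = convex hull (std_vertex ` I)" "S' = convex hull (std_vertex ` J)"
    by (auto simp: two_skeleton_def)
  have "S \<inter> S' = convex hull (std_vertex ` I \<inter> std_vertex ` J)"
    using IJ convex_hull_Int[of "std_vertex ` I" "std_vertex ` J"]
      affine_independent_std_vertices[of "I \<union> J"] by (simp add: image_Un)
  then show "(S \<inter> S') face_of S"
    using IJ face_of_convex_hull_affine_independent[OF affine_independent_std_vertices] by blast
qed

lemma cvertices_two_skeleton: "cvertices two_skeleton = range std_vertex"
proof (rule set_eqI, rule iffI)
  fix v assume "v \<in> cvertices two_skeleton"
  then obtain I where I: "{v} = convex hull (std_vertex ` I)"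
    by (auto simp: cvertices_def two_skeleton_def)
  then have "std_vertex ` I \<subseteq> {v}" "I \<noteq> {}" using hull_subset[of "std_vertex ` I"] by auto
  then show "v \<in> range std_vertex" by blast
next
  fix v assume "v \<in> range std_vertex"
  then obtain i where "{v} = convex hull (std_vertex ` {i})" by auto
  then show "v \<in> cvertices two_skeleton"
    by (auto simp: cvertices_def two_skeleton_def intro!: exI[of _ "{i}"])
qed

lemma proper_vertex_colouring_two_skeleton: "\<exists>c. proper_vertex_colouring two_skeleton 5 c"
proof -
  obtain \<phi> :: "5 \<Rightarrow> nat" where \<phi>: "bij_betw \<phi> UNIV {0..<5}"
    using ex_bij_betw_finite_nat[of "UNIV :: 5 set"] by auto
  define c where "c v = \<phi> (inv std_vertex v)" for v
  have c: "c (std_vertex i) = \<phi> i" for i by (simp add: c_def inv_f_f[OF inj_std_vertex])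
  have "proper_vertex_colouring two_skeleton 5 c"
    unfolding proper_vertex_colouring_def cvertices_two_skeleton
    using \<phi> by (auto simp: c bij_betw_def inj_def)
  then show ?thesis by blast
qed

definition opposite_triangle :: "5 \<Rightarrow> 5 \<Rightarrow> (real^5) set" where
  "opposite_triangle p q = convex hull (std_vertex ` (- {p, q}))"

lemma opposite_triangle_commute: "opposite_triangle p q = opposite_triangle q p"
  by (simp add: opposite_triangle_def insert_commute)

lemma opposite_triangle_eq: "opposite_triangle p q = {x \<in> std_simplex. x$p = 0 \<and> x$q = 0}"
  unfolding opposite_triangle_def convex_hull_std_vertices by auto

lemma opposite_triangle_cface:
  assumes "p \<noteq> q"
  shows "opposite_triangle p q \<in> cfaces two_skeleton"
proof -
  have "card (- {p, q}) = 3" using assms by (simp add: card_Compl_finite)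
  then show ?thesis
    using simplex_convex_hull_std_vertices[of "- {p, q}"]
    by (auto simp: cfaces_def two_skeleton_def opposite_triangle_def)
qed

lemma opposite_triangles_neq:
  assumes "p \<noteq> q" "p \<noteq> r" "q \<noteq> r"
  shows "opposite_triangle p q \<noteq> opposite_triangle p r"
proof -
  have "std_vertex r \<in> std_simplex" by (simp add: std_simplex_def std_vertex_nth)
  then have "std_vertex r \<in> opposite_triangle p q"
    using assms by (simp add: opposite_triangle_eq std_vertex_nth)
  moreover have "std_vertex r \<notin> opposite_triangle p r"
    by (simp add: opposite_triangle_eq std_vertex_nth)
  ultimately show ?thesis by blast
qed

definition facet_boundary :: "5 \<Rightarrow> (real^5) set" where
  "facet_boundary j = {x \<in> std_simplex. x$j = 0 \<and> (\<exists>k. k \<noteq> j \<and> x$k = 0)}"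

lemma facet_boundary_eq: "facet_boundary j = (\<Union>k\<in>- {j}. opposite_triangle j k)"
  by (auto simp: facet_boundary_def opposite_triangle_eq)

definition zero_sum_hyperplane :: "(real^5) set" where
  "zero_sum_hyperplane = {x. (\<Sum>i\<in>UNIV. x$i) = 0}"

definition barycentre :: "real^5" where
  "barycentre = (\<chi> i. 1/5)"

definition simplex_boundary :: "(real^5) set" where
  "simplex_boundary = {x \<in> std_simplex. \<exists>i. x$i = 0}"

lemma std_simplex_minus_barycentre: "x \<in> std_simplex \<Longrightarrow> x - barycentre \<in> zero_sum_hyperplane"
  by (simp add: std_simplex_def zero_sum_hyperplane_def barycentre_def sum_subtractf)

lemma Union_two_skeleton:
  "\<Union>two_skeleton = {x \<in> std_simplex. \<exists>a b. a \<noteq> b \<and> x$a = 0 \<and> x$b = 0}"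
proof (rule set_eqI, rule iffI)
  fix x assume "x \<in> \<Union>two_skeleton"
  then obtain I where I: "card I \<le> 3" "x \<in> convex hull (std_vertex ` I)"
    by (auto simp: two_skeleton_def)
  have "2 \<le> card (- I)" using I(1) card_Compl_finite[of I] by simp
  then obtain J where "J \<subseteq> - I" "card J = 2" by (rule obtain_subset_with_card_n)
  then obtain a b where "a \<in> - I" "b \<in> - I" "a \<noteq> b" by (auto simp: card_2_iff)
  then show "x \<in> {x \<in> std_simplex. \<exists>a b. a \<noteq> b \<and> x$a = 0 \<and> x$b = 0}"
    using I(2) by (auto simp: convex_hull_std_vertices)
next
  fix x assume "x \<in> {x \<in> std_simplex. \<exists>a b. a \<noteq> b \<and> x$a = 0 \<and> x$b = 0}"
  then obtain a b where "a \<noteq> b" "x \<in> opposite_triangle a b" by (auto simp: opposite_triangle_eq)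
  then show "x \<in> \<Union>two_skeleton"
    using opposite_triangle_cface by (auto simp: cfaces_def)
qed

lemma Union_two_skeleton_subset: "\<Union>two_skeleton \<subseteq> simplex_boundary"
  unfolding Union_two_skeleton simplex_boundary_def by blast

section \<open>Radial projection onto the 3-sphere\<close>

locale hyperplane_chart =
  fixes F :: "real^5 \<Rightarrow> real^4" and G :: "real^4 \<Rightarrow> real^5"
  assumes linear_F: "linear F" and linear_G: "linear G"
    and G_F: "\<And>x. x \<in> zero_sum_hyperplane \<Longrightarrow> G (F x) = x"
    and F_G: "\<And>y. F (G y) = y"
    and G_in_hyperplane: "\<And>y. G y \<in> zero_sum_hyperplane"
begin

definition chart :: "real^5 \<Rightarrow> real^4" where
  "chart x = F (x - barycentre)"

definition embed :: "real^5 \<Rightarrow> real^4" where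
  "embed x = chart x /\<^sub>R norm (chart x)"

definition min_coord :: "real^4 \<Rightarrow> real" where
  "min_coord y = Min (range (\<lambda>i. G y $ i))"

text \<open>The inverse of \<open>embed\<close>: the ray from the barycentre in direction \<open>G y\<close> leaves the
  simplex where its smallest coordinate reaches \<open>0\<close>.\<close>
definition unembed :: "real^4 \<Rightarrow> real^5" where
  "unembed y = barycentre + (-1 / (5 * min_coord y)) *\<^sub>R G y"

lemma min_coord_le: "min_coord y \<le> G y $ i"
  unfolding min_coord_def by (intro Min_le) auto

lemma min_coord_attained: "\<exists>i. G y $ i = min_coord y"
proof -
  have "min_coord y \<in> range (\<lambda>i. G y $ i)" unfolding min_coord_def by (intro Min_in) auto
  then show ?thesis by auto
qed

lemma G_chart: "x \<in> std_simplex \<Longrightarrow> G (chart x) = x - barycentre"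
  unfolding chart_def using G_F std_simplex_minus_barycentre by blast

lemma chart_nonzero:
  assumes "x \<in> simplex_boundary"
  shows "chart x \<noteq> 0"
proof
  assume "chart x = 0"
  have "x \<in> std_simplex" using assms by (simp add: simplex_boundary_def)
  then have "x - barycentre = G (chart x)" by (simp add: G_chart)
  also have "\<dots> = 0" using \<open>chart x = 0\<close> linear_0[OF linear_G] by simp
  finally have "x - barycentre = 0" .
  moreover obtain i where "x$i = 0" using assms by (auto simp: simplex_boundary_def)
  then have "(x - barycentre)$i = -1/5" by (simp add: barycentre_def)
  ultimately show False by simp
qed

lemma embed_in_sphere: "x \<in> simplex_boundary \<Longrightarrow> embed x \<in> S3"
  using chart_nonzero by (simp add: embed_def)

lemma G_embed:
  assumes "x \<in> simplex_boundary"
  shows "G (embed x) $ i = (x$i - 1/5) / norm (chart x)"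
proof -
  have "G (embed x) = (1 / norm (chart x)) *\<^sub>R (x - barycentre)"
    using assms G_chart linear_scale[OF linear_G]
    by (simp add: embed_def simplex_boundary_def divide_inverse_commute)
  then show ?thesis by (simp add: barycentre_def)
qed

lemma unembed_embed:
  assumes x: "x \<in> simplex_boundary"
  shows "unembed (embed x) = x"
proof -
  define r where "r = 1 / norm (chart x)"
  have r: "r > 0" using chart_nonzero[OF x] by (simp add: r_def)
  have G: "G (embed x) $ i = r * (x$i - 1/5)" for i using G_embed[OF x] by (simp add: r_def)
  have "min_coord (embed x) = r * (0 - 1/5)"
    unfolding min_coord_def
  proof (rule Min_eqI)
    fix t assume "t \<in> range (\<lambda>i. G (embed x) $ i)"
    then obtain i where t: "t = r * (x$i - 1/5)" by (auto simp: G)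
    have "0 \<le> r * x$i" using x r by (simp add: simplex_boundary_def std_simplex_def)
    then show "r * (0 - 1/5) \<le> t" unfolding t by (simp add: algebra_simps)
  next
    obtain i where "x$i = 0" using x by (auto simp: simplex_boundary_def)
    then have "G (embed x) $ i = r * (0 - 1/5)" by (simp add: G)
    then show "r * (0 - 1/5) \<in> range (\<lambda>i. G (embed x) $ i)" by (metis rangeI)
  qed simp
  then show ?thesis
    using r by (simp add: unembed_def vec_eq_iff G barycentre_def field_simps)
qed

lemma min_coord_neg:
  assumes "y \<in> S3"
  shows "min_coord y < 0"
proof (rule ccontr)
  assume "\<not> min_coord y < 0"
  then have "\<forall>i. 0 \<le> G y $ i" using min_coord_le by (metis not_less order_trans)
  moreover have "(\<Sum>i\<in>UNIV. G y $ i) = 0"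
    using G_in_hyperplane[of y] by (simp add: zero_sum_hyperplane_def)
  ultimately have "G y = 0" by (simp add: sum_nonneg_eq_0_iff vec_eq_iff)
  then have "y = 0" using F_G[of y] linear_0[OF linear_F] by simp
  then show False using assms by simp
qed

lemma unembed_nth: "y \<in> S3 \<Longrightarrow> unembed y $ k = (G y $ k - min_coord y) / (- 5 * min_coord y)"
  using min_coord_neg[of y] by (simp add: unembed_def barycentre_def field_simps)

lemma unembed_nth_eq_0_iff:
  assumes "y \<in> S3"
  shows "unembed y $ k = 0 \<longleftrightarrow> (\<forall>i. G y $ k \<le> G y $ i)"
proof -
  have "unembed y $ k = 0 \<longleftrightarrow> G y $ k = min_coord y"
    using unembed_nth[OF assms, of k] min_coord_neg[OF assms] by simp
  also have "\<dots> \<longleftrightarrow> (\<forall>i. G y $ k \<le> G y $ i)"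
    using min_coord_le[of y] min_coord_attained[of y] by (metis order_antisym)
  finally show ?thesis .
qed

lemma unembed_in_simplex_boundary:
  assumes y: "y \<in> S3"
  shows "unembed y \<in> simplex_boundary"
proof -
  have m: "min_coord y < 0" by (rule min_coord_neg[OF y])
  have "0 \<le> unembed y $ k" for k
    using m min_coord_le[of y k] by (simp add: unembed_nth[OF y] divide_nonneg_neg)
  moreover have "(\<Sum>k\<in>UNIV. unembed y $ k) = 1"
  proof -
    have "(\<Sum>k\<in>UNIV. unembed y $ k) = (\<Sum>k\<in>UNIV. G y $ k - min_coord y) / (- 5 * min_coord y)"
      unfolding unembed_nth[OF y] by (rule sum_divide_distrib[symmetric])
    also have "\<dots> = (0 - 5 * min_coord y) / (- 5 * min_coord y)"
      using G_in_hyperplane[of y] by (simp add: sum_subtractf zero_sum_hyperplane_def)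
    finally show ?thesis using m by simp
  qed
  moreover have "\<exists>i. unembed y $ i = 0"
    using min_coord_attained[of y] unembed_nth[OF y] by auto
  ultimately show ?thesis by (simp add: simplex_boundary_def std_simplex_def)
qed

lemma embed_unembed:
  assumes y: "y \<in> S3"
  shows "embed (unembed y) = y"
proof -
  define t where "t = -1 / (5 * min_coord y)"
  have t: "t > 0" using min_coord_neg[OF y] by (simp add: t_def divide_neg_neg)
  have "unembed y - barycentre = t *\<^sub>R G y" by (simp add: unembed_def t_def)
  then have "chart (unembed y) = t *\<^sub>R y" by (simp add: chart_def linear_scale[OF linear_F] F_G)
  then show ?thesis using t y by (simp add: embed_def)
qed

lemma embed_image: "P \<subseteq> simplex_boundary \<Longrightarrow> embed ` P = {y \<in> S3. unembed y \<in> P}"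
  using embed_in_sphere unembed_embed embed_unembed by force

lemma inj_on_embed: "inj_on embed simplex_boundary"
  by (metis unembed_embed inj_onI)

lemma continuous_on_embed: "continuous_on simplex_boundary embed"
proof -
  have "continuous_on UNIV F"
    using linear_F by (simp add: linear_continuous_on linear_conv_bounded_linear)
  then have "continuous_on ((\<lambda>x. x - barycentre) ` simplex_boundary) F"
    using continuous_on_subset by blast
  then have "continuous_on simplex_boundary (F \<circ> (\<lambda>x. x - barycentre))"
    by (intro continuous_on_compose continuous_intros)
  then have "continuous_on simplex_boundary chart" by (simp add: chart_def comp_def)
  then show ?thesis
    unfolding embed_def using chart_nonzero by (intro continuous_intros) auto
qed

end

lemma ex_hyperplane_chart: "\<exists>F G. hyperplane_chart F G"
proof -
  define one :: "real^5" where "one = (\<chi> i. 1)"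
  have hyperplane: "zero_sum_hyperplane = {x. one \<bullet> x = 0}"
    by (simp add: zero_sum_hyperplane_def one_def inner_vec_def)
  have "one \<noteq> 0" by (simp add: one_def vec_eq_iff)
  then have "dim zero_sum_hyperplane = dim (UNIV :: (real^4) set)"
    unfolding hyperplane by (simp add: dim_hyperplane dim_UNIV)
  moreover have "subspace zero_sum_hyperplane" unfolding hyperplane by (rule subspace_hyperplane)
  ultimately obtain F :: "real^5 \<Rightarrow> real^4" and G :: "real^4 \<Rightarrow> real^5"
    where "linear F" "linear G" "G ` UNIV = zero_sum_hyperplane"
      "\<And>x. x \<in> zero_sum_hyperplane \<Longrightarrow> G (F x) = x" "\<And>y. y \<in> UNIV \<Longrightarrow> F (G y) = y"
    using isometries_subspaces[OF _ subspace_UNIV] by metis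
  then have "hyperplane_chart F G" by (auto simp: hyperplane_chart_def)
  then show ?thesis by blast
qed

section \<open>Chambers of the projected 2-skeleton\<close>

context hyperplane_chart
begin

text \<open>\<open>chamber j\<close> is the radial image of the open facet opposite \<open>std_vertex j\<close>.\<close>

definition min_cone :: "5 \<Rightarrow> (real^4) set" where
  "min_cone j = {z. \<forall>k. k \<noteq> j \<longrightarrow> G z $ j < G z $ k}"

definition chamber :: "5 \<Rightarrow> (real^4) set" where
  "chamber j = S3 \<inter> min_cone j"

lemma embed_two_skeleton:
  "embed ` \<Union>two_skeleton = {y \<in> S3. \<exists>a b. a \<noteq> b \<and> unembed y $ a = 0 \<and> unembed y $ b = 0}"
proof -
  have "embed ` \<Union>two_skeleton = {y \<in> S3. unembed y \<in> \<Union>two_skeleton}"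
    using embed_image Union_two_skeleton_subset by blast
  moreover have "unembed y \<in> std_simplex" if "y \<in> S3" for y
    using unembed_in_simplex_boundary[OF that] by (simp add: simplex_boundary_def)
  ultimately show ?thesis unfolding Union_two_skeleton by blast
qed

lemma sphere_minus_two_skeleton: "S3 - embed ` \<Union>two_skeleton = (\<Union>j. chamber j)"
proof (rule set_eqI, rule iffI)
  fix y assume y: "y \<in> S3 - embed ` \<Union>two_skeleton"
  then have yS: "y \<in> S3" and
    single: "\<not> (\<exists>a b. a \<noteq> b \<and> unembed y $ a = 0 \<and> unembed y $ b = 0)"
    unfolding embed_two_skeleton by auto
  obtain j where j: "G y $ j = min_coord y" using min_coord_attained by blast
  have jmin: "\<forall>i. G y $ j \<le> G y $ i" using j min_coord_le by metis
  have "G y $ j < G y $ k" if "k \<noteq> j" for k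
  proof (rule ccontr)
    assume "\<not> G y $ j < G y $ k"
    then have "\<forall>i. G y $ k \<le> G y $ i" using jmin by (metis not_less order_trans)
    then have "unembed y $ k = 0" "unembed y $ j = 0"
      using unembed_nth_eq_0_iff[OF yS] jmin by blast+
    then show False using single that by blast
  qed
  then show "y \<in> (\<Union>j. chamber j)" using yS by (auto simp: chamber_def min_cone_def)
next
  fix y assume "y \<in> (\<Union>j. chamber j)"
  then obtain j where yS: "y \<in> S3" and lt: "\<And>k. k \<noteq> j \<Longrightarrow> G y $ j < G y $ k"
    by (auto simp: chamber_def min_cone_def)
  have "a = j" if "unembed y $ a = 0" for a
  proof (rule ccontr)
    assume "a \<noteq> j"
    then have "G y $ j < G y $ a" using lt by blast
    moreover have "G y $ a \<le> G y $ j" using that unembed_nth_eq_0_iff[OF yS] by blast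
    ultimately show False by simp
  qed
  then have "y \<notin> embed ` \<Union>two_skeleton" unfolding embed_two_skeleton by blast
  then show "y \<in> S3 - embed ` \<Union>two_skeleton" using yS by simp
qed

lemma continuous_on_G_nth: "continuous_on UNIV (\<lambda>z. G z $ i)"
proof -
  have "bounded_linear G" using linear_G by (simp add: linear_conv_bounded_linear)
  then have "bounded_linear (\<lambda>z. G z $ i)"
    using bounded_linear_vec_nth[of i] bounded_linear_compose by blast
  then show ?thesis by (simp add: linear_continuous_on)
qed

lemma open_min_cone: "open (min_cone j)"
proof -
  have "min_cone j = (\<Inter>k\<in>- {j}. {z. G z $ j < G z $ k})" by (auto simp: min_cone_def)
  moreover have "open {z. G z $ j < G z $ k}" for k
    using open_Collect_less[OF continuous_on_G_nth continuous_on_G_nth] .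
  ultimately show ?thesis by (simp add: open_INT)
qed

lemma min_cone_nonzero: "z \<in> min_cone j \<Longrightarrow> z \<noteq> 0"
proof
  assume "z \<in> min_cone j" "z = 0"
  moreover obtain k :: 5 where "k \<noteq> j" by (metis zero_neq_one)
  ultimately show False using linear_0[OF linear_G] by (auto simp: min_cone_def)
qed

lemma disjoint_min_cones: "j \<noteq> k \<Longrightarrow> min_cone j \<inter> min_cone k = {}"
  by (auto simp: min_cone_def) (metis less_asym)

lemma convex_min_cone: "convex (min_cone j)"
proof (rule convexI)
  fix x y and u v :: real assume xy: "x \<in> min_cone j" "y \<in> min_cone j"
    and uv: "0 \<le> u" "0 \<le> v" "u + v = 1"
  have "u * a + v * c < u * b + v * d" if "a < b" "c < d" for a b c d :: real
  proof (cases "u = 0")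
    case True then show ?thesis using uv that by simp
  next
    case False
    then have "u * a < u * b" using uv that by (simp add: mult_strict_left_mono)
    moreover have "v * c \<le> v * d" using uv that by (simp add: mult_left_mono)
    ultimately show ?thesis by simp
  qed
  then show "u *\<^sub>R x + v *\<^sub>R y \<in> min_cone j"
    using xy by (auto simp: min_cone_def linear_add[OF linear_G] linear_scale[OF linear_G])
qed

lemma chamber_eq_normalised_min_cone: "chamber j = (\<lambda>z. z /\<^sub>R norm z) ` min_cone j"
proof (rule set_eqI, rule iffI)
  fix y assume "y \<in> chamber j"
  then have "y \<in> min_cone j" "norm y = 1" by (auto simp: chamber_def)
  then show "y \<in> (\<lambda>z. z /\<^sub>R norm z) ` min_cone j"
    using image_eqI[of y "\<lambda>z. z /\<^sub>R norm z" y] by simp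
next
  fix y assume "y \<in> (\<lambda>z. z /\<^sub>R norm z) ` min_cone j"
  then obtain z where z: "z \<in> min_cone j" "y = z /\<^sub>R norm z" by blast
  have nz: "norm z > 0" using min_cone_nonzero[OF z(1)] by simp
  have "G y = (1 / norm z) *\<^sub>R G z"
    using z(2) linear_scale[OF linear_G] by (simp add: divide_inverse_commute)
  then have "y \<in> min_cone j" using z(1) nz by (simp add: min_cone_def divide_strict_right_mono)
  moreover have "norm y = 1" using z(2) nz by simp
  ultimately show "y \<in> chamber j" by (simp add: chamber_def)
qed

lemma connected_chamber: "connected (chamber j)"
proof -
  have "continuous_on (min_cone j) (\<lambda>z. z /\<^sub>R norm z)"
    using min_cone_nonzero by (intro continuous_intros) auto
  then show ?thesis unfolding chamber_eq_normalised_min_cone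
    using connected_continuous_image convex_connected convex_min_cone by blast
qed

lemma chamber_nonempty: "chamber j \<noteq> {}"
proof -
  define x :: "real^5" where "x = (\<chi> i. if i = j then 0 else 1/4)"
  have "(\<Sum>i\<in>UNIV. x$i) = (\<Sum>i\<in>UNIV - {j}. 1/4)"
    by (simp add: x_def sum.If_cases Compl_eq_Diff_UNIV)
  also have "\<dots> = 1" by (simp add: card_Diff_subset)
  finally have x: "x \<in> simplex_boundary"
    by (auto simp: simplex_boundary_def std_simplex_def x_def)
  have "norm (chart x) > 0" using chart_nonzero[OF x] by simp
  then have "G (embed x) $ j < G (embed x) $ k" if "k \<noteq> j" for k
    unfolding G_embed[OF x] by (intro divide_strict_right_mono) (simp_all add: x_def that)
  then have "embed x \<in> min_cone j" by (simp add: min_cone_def)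
  then show ?thesis using embed_in_sphere[OF x] by (auto simp: chamber_def)
qed

lemma connected_component_chamber:
  assumes y: "y \<in> chamber j"
  shows "connected_component_set (S3 - embed ` \<Union>two_skeleton) y = chamber j"
proof
  show "chamber j \<subseteq> connected_component_set (S3 - embed ` \<Union>two_skeleton) y"
    using y connected_chamber
    by (rule connected_component_maximal) (auto simp: sphere_minus_two_skeleton)
next
  let ?X = "S3 - embed ` \<Union>two_skeleton"
  let ?C = "connected_component_set ?X y"
  let ?B = "\<Union>k\<in>- {j}. min_cone k"
  have "y \<in> ?X" unfolding sphere_minus_two_skeleton using y by blast
  then have "y \<in> ?C" by simp
  then have meets: "min_cone j \<inter> ?C \<noteq> {}" using y by (auto simp: chamber_def)
  have CX: "?C \<subseteq> ?X" by (rule connected_component_subset)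
  have cover: "?C \<subseteq> min_cone j \<union> ?B"
  proof
    fix z assume "z \<in> ?C"
    then obtain k where "z \<in> chamber k" using CX unfolding sphere_minus_two_skeleton by blast
    then show "z \<in> min_cone j \<union> ?B" by (cases "k = j") (auto simp: chamber_def)
  qed
  have "min_cone j \<inter> ?B = {}" using disjoint_min_cones by blast
  then have "min_cone j \<inter> ?B \<inter> ?C = {}" by blast
  moreover have "open ?B" using open_min_cone by blast
  ultimately have "?B \<inter> ?C = {}"
    using connectedD[OF connected_connected_component open_min_cone _ _ cover] meets by blast
  then have "?C \<subseteq> min_cone j" using cover by blast
  moreover have "?C \<subseteq> S3" using CX by blast
  ultimately show "?C \<subseteq> chamber j" by (auto simp: chamber_def)
qed

lemma chambers_two_skeleton: "chambers two_skeleton embed = range chamber"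
proof (rule set_eqI, rule iffI)
  fix U assume "U \<in> chambers two_skeleton embed"
  then obtain y where y: "y \<in> S3 - embed ` \<Union>two_skeleton"
      "U = connected_component_set (S3 - embed ` \<Union>two_skeleton) y"
    by (auto simp: chambers_def components_iff)
  then obtain j where "y \<in> chamber j" unfolding sphere_minus_two_skeleton by blast
  then show "U \<in> range chamber" using connected_component_chamber y(2) by auto
next
  fix U assume "U \<in> range chamber"
  then obtain j where j: "U = chamber j" by blast
  obtain y where y: "y \<in> chamber j" using chamber_nonempty by blast
  then have "y \<in> S3 - embed ` \<Union>two_skeleton" unfolding sphere_minus_two_skeleton by blast
  then show "U \<in> chambers two_skeleton embed"
    using connected_component_chamber[OF y] j by (auto simp: chambers_def components_iff)
qed

lemma closure_chamber: "closure (chamber j) = {y \<in> S3. unembed y $ j = 0}"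
proof
  have "{y \<in> S3. unembed y $ j = 0} = S3 \<inter> (\<Inter>k. {y. G y $ j \<le> G y $ k})"
    using unembed_nth_eq_0_iff by auto
  moreover have "closed {y. G y $ j \<le> G y $ k}" for k
    using closed_Collect_le[OF continuous_on_G_nth continuous_on_G_nth] .
  ultimately have "closed {y \<in> S3. unembed y $ j = 0}" by (simp add: closed_INT closed_Int)
  moreover have "chamber j \<subseteq> {y \<in> S3. unembed y $ j = 0}"
    using unembed_nth_eq_0_iff by (force simp: chamber_def min_cone_def)
  ultimately show "closure (chamber j) \<subseteq> {y \<in> S3. unembed y $ j = 0}"
    by (rule closure_minimal[rotated])
next
  show "{y \<in> S3. unembed y $ j = 0} \<subseteq> closure (chamber j)"
  proof
    fix y assume "y \<in> {y \<in> S3. unembed y $ j = 0}"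
    then have yS: "norm y = 1" and ymin: "\<And>k. G y $ j \<le> G y $ k"
      using unembed_nth_eq_0_iff by auto
    define d where "d = F (barycentre - std_vertex j)"
    have "barycentre - std_vertex j \<in> zero_sum_hyperplane"
      by (simp add: zero_sum_hyperplane_def barycentre_def std_vertex_nth sum_subtractf)
    then have Gd: "G d $ k = 1/5 - (if k = j then 1 else 0)" for k
      by (simp add: d_def G_F barycentre_def std_vertex_nth)
    define \<phi> where "\<phi> t = (y + t *\<^sub>R d) /\<^sub>R norm (y + t *\<^sub>R d)" for t :: real
    have "G (y + t *\<^sub>R d) $ j < G (y + t *\<^sub>R d) $ k" if "t > 0" "k \<noteq> j" for t k
      using ymin[of k] that by (simp add: linear_add[OF linear_G] linear_scale[OF linear_G] Gd)
    then have cone: "y + t *\<^sub>R d \<in> min_cone j" if "t > 0" for t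
      using that by (simp add: min_cone_def)
    have "y + t *\<^sub>R d \<noteq> 0" if "t \<in> {0..1}" for t
      using yS cone[of t] min_cone_nonzero that by (cases "t = 0") auto
    then have "continuous_on (closure {0<..<1}) \<phi>"
      unfolding \<phi>_def by (auto intro!: continuous_intros)
    moreover have "\<phi> ` {0<..<1} \<subseteq> closure (chamber j)"
      using cone closure_subset unfolding chamber_eq_normalised_min_cone \<phi>_def by fastforce
    ultimately have "\<phi> ` closure {0<..<1} \<subseteq> closure (chamber j)"
      using image_closure_subset by blast
    moreover have "\<phi> 0 = y" using yS by (simp add: \<phi>_def)
    ultimately show "y \<in> closure (chamber j)" by force
  qed
qed

lemma closure_chamber_eq_embed: "closure (chamber j) = embed ` (convex hull (std_vertex ` (- {j})))"
proof -
  have "convex hull (std_vertex ` (- {j})) = {x \<in> std_simplex. x$j = 0}"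
    unfolding convex_hull_std_vertices by auto
  moreover have "{x \<in> std_simplex. x$j = 0} \<subseteq> simplex_boundary"
    by (auto simp: simplex_boundary_def)
  ultimately show ?thesis
    unfolding closure_chamber using embed_image unembed_in_simplex_boundary
    by (auto simp: simplex_boundary_def)
qed

lemma chamber_boundary_chamber: "chamber_boundary (chamber j) = embed ` facet_boundary j"
proof -
  have "facet_boundary j \<subseteq> simplex_boundary" by (auto simp: facet_boundary_def simplex_boundary_def)
  then have "embed ` facet_boundary j = {y \<in> S3. unembed y \<in> facet_boundary j}"
    by (rule embed_image)
  also have "\<dots> = {y \<in> S3. unembed y $ j = 0} - chamber j"
  proof (rule set_eqI, rule iffI)
    fix y assume "y \<in> {y \<in> S3. unembed y \<in> facet_boundary j}"
    then obtain k where y: "y \<in> S3" "unembed y $ j = 0" "k \<noteq> j" "unembed y $ k = 0"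
      by (auto simp: facet_boundary_def)
    then have "G y $ k \<le> G y $ j" using unembed_nth_eq_0_iff by blast
    then show "y \<in> {y \<in> S3. unembed y $ j = 0} - chamber j"
      using y by (auto simp: chamber_def min_cone_def not_less)
  next
    fix y assume y: "y \<in> {y \<in> S3. unembed y $ j = 0} - chamber j"
    then have yS: "y \<in> S3" and jmin: "\<forall>i. G y $ j \<le> G y $ i"
      using unembed_nth_eq_0_iff by auto
    obtain k where k: "k \<noteq> j" "G y $ k \<le> G y $ j"
      using y by (auto simp: chamber_def min_cone_def not_less)
    then have "unembed y $ k = 0"
      using unembed_nth_eq_0_iff[OF yS] jmin order_trans by blast
    then show "y \<in> {y \<in> S3. unembed y \<in> facet_boundary j}"
      using yS y k(1) unembed_in_simplex_boundary[OF yS]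
      by (auto simp: facet_boundary_def simplex_boundary_def)
  qed
  finally show ?thesis by (simp add: chamber_boundary_def closure_chamber)
qed

lemma closure_chamber_homeomorphic_ball: "closure (chamber j) homeomorphic cball (0::real^3) 1"
proof -
  let ?F = "convex hull (std_vertex ` (- {j}))"
  have "?F \<subseteq> simplex_boundary"
    unfolding convex_hull_std_vertices by (auto simp: simplex_boundary_def)
  then have "continuous_on ?F embed" "inj_on embed ?F"
    using continuous_on_subset[OF continuous_on_embed] inj_on_subset[OF inj_on_embed] by auto
  then have "?F homeomorphic closure (chamber j)"
    using homeomorphism_compact[OF finite_imp_compact_convex_hull[OF finite_imageI[OF finite]]]
      closure_chamber_eq_embed unfolding homeomorphic_def by metis
  moreover have "?F homeomorphic cball (0::real^3) 1"
  proof (rule homeomorphic_convex_compact_sets)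
    have "card (- {j}) = 4" by (simp add: card_Compl_finite)
    then show "aff_dim ?F = aff_dim (cball (0::real^3) 1)"
      using simplex_convex_hull_std_vertices[of "- {j}"] aff_dim_simplex by (simp add: aff_dim_cball)
  qed (auto intro: finite_imp_compact_convex_hull)
  ultimately show ?thesis using homeomorphic_sym homeomorphic_trans by metis
qed

lemma tetrahedral_chamber_chamber: "tetrahedral_chamber two_skeleton embed (chamber j)"
  unfolding tetrahedral_chamber_iff
proof (intro conjI exI[of _ "std_vertex ` (- {j})"] ballI)
  show "card (std_vertex ` (- {j})) = 4" by (simp add: card_std_vertices card_Compl_finite)
  have facet: "std_vertex ` (- {j}) - {std_vertex k} = std_vertex ` (- {j, k})" for k
    using inj_std_vertex by (auto simp: inj_eq)
  show "convex hull (std_vertex ` (- {j}) - {v}) \<in> two_skeleton"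
    if v: "v \<in> std_vertex ` (- {j})" for v
  proof -
    obtain k where "k \<noteq> j" "v = std_vertex k" using v by auto
    then show ?thesis
      using opposite_triangle_cface[of j k] by (simp add: facet opposite_triangle_def cfaces_def)
  qed
  have "(\<Union>v\<in>std_vertex ` (- {j}). convex hull (std_vertex ` (- {j}) - {v})) = facet_boundary j"
    by (simp add: facet facet_boundary_eq opposite_triangle_def)
  then show "chamber_boundary (chamber j) =
      embed ` (\<Union>v\<in>std_vertex ` (- {j}). convex hull (std_vertex ` (- {j}) - {v}))"
    by (simp add: chamber_boundary_chamber)
  show "closure (chamber j) homeomorphic cball (0::real^3) 1"
    by (rule closure_chamber_homeomorphic_ball)
qed

lemma triangulation_two_skeleton: "triangulation_S3 two_skeleton embed"
  unfolding triangulation_S3_def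
proof (intro conjI ballI)
  show "simplicial_2_complex two_skeleton" by (rule simplicial_2_complex_two_skeleton)
  show "continuous_on (\<Union>two_skeleton) embed"
    using continuous_on_subset[OF continuous_on_embed Union_two_skeleton_subset] .
  show "inj_on embed (\<Union>two_skeleton)"
    using inj_on_subset[OF inj_on_embed Union_two_skeleton_subset] .
  show "embed ` \<Union>two_skeleton \<subseteq> S3"
    using embed_in_sphere Union_two_skeleton_subset by blast
  show "tetrahedral_chamber two_skeleton embed U" if "U \<in> chambers two_skeleton embed" for U
    using that tetrahedral_chamber_chamber by (auto simp: chambers_two_skeleton)
qed

end

section \<open>No proper 4-face-colouring\<close>

lemma odd_complete_graph_not_edge_colourable:
  fixes col :: "'a \<Rightarrow> 'a \<Rightarrow> nat"
  assumes V: "finite V" "odd (card V)" "1 < card V"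
    and sym: "\<And>p q. col p q = col q p"
    and range: "\<And>p q. p \<in> V \<Longrightarrow> q \<in> V \<Longrightarrow> p \<noteq> q \<Longrightarrow> col p q < card V - 1"
    and proper: "\<And>p q r. p \<in> V \<Longrightarrow> q \<in> V \<Longrightarrow> r \<in> V \<Longrightarrow> p \<noteq> q \<Longrightarrow> p \<noteq> r \<Longrightarrow> q \<noteq> r
                   \<Longrightarrow> col p q \<noteq> col p r"
  shows False
proof -
  have "\<exists>q \<in> V - {p}. col p q = 0" if p: "p \<in> V" for p
  proof -
    have "inj_on (col p) (V - {p})" using proper p by (auto simp: inj_on_def)
    moreover have "col p ` (V - {p}) \<subseteq> {..<card V - 1}" using range p by auto
    moreover have "card (V - {p}) = card {..<card V - 1}" using p by simp
    ultimately have "col p ` (V - {p}) = {..<card V - 1}"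
      by (simp add: card_image card_subset_eq)
    then show ?thesis using V(3) by (metis imageE lessThan_iff zero_less_diff)
  qed
  then obtain partner where partner: "\<And>p. p \<in> V \<Longrightarrow> partner p \<in> V - {p} \<and> col p (partner p) = 0"
    by metis
  have "partner (partner p) = p" if p: "p \<in> V" for p
  proof (rule ccontr)
    assume ne: "partner (partner p) \<noteq> p"
    let ?q = "partner p"
    have q: "?q \<in> V" "?q \<noteq> p" "col p ?q = 0" using partner[OF p] by auto
    have qq: "partner ?q \<in> V" "partner ?q \<noteq> ?q" "col ?q (partner ?q) = 0"
      using partner[OF q(1)] by auto
    have "col ?q p = col ?q (partner ?q)" using q(3) qq(3) sym by metis
    then show False using proper[OF q(1) p qq(1)] q(2) qq(2) ne by auto
  qed
  \<comment> \<open>\<open>partner\<close> pairs off \<open>V\<close>, so \<open>card V\<close> vanishes in \<open>\<int>/2\<close>.\<close>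
  then have "(\<Sum>p\<in>V. 1 :: bit) = 0"
    using partner by (intro sum_involution_eq_0[where h = partner]) auto
  moreover obtain m where "card V = 2 * m + 1" using V(2) by (rule oddE)
  ultimately show False by simp
qed

context hyperplane_chart
begin

lemma not_4_face_colourable_two_skeleton: "\<not> proper_face_colouring two_skeleton embed 4 col"
proof
  assume col: "proper_face_colouring two_skeleton embed 4 col"
  have on_boundary: "face_on_boundary embed (opposite_triangle p q) (chamber p)" if "p \<noteq> q" for p q
  proof -
    have "opposite_triangle p q \<subseteq> facet_boundary p"
      using that by (auto simp: facet_boundary_eq)
    then show ?thesis unfolding face_on_boundary_def chamber_boundary_chamber by (rule image_mono)
  qed
  show False
  proof (rule odd_complete_graph_not_edge_colourable[of "UNIV :: 5 set" "\<lambda>p q. col (opposite_triangle p q)"])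
    show "col (opposite_triangle p q) = col (opposite_triangle q p)" for p q
      by (simp add: opposite_triangle_commute)
    show "col (opposite_triangle p q) < CARD(5) - 1" if "p \<noteq> q" for p q
      using col opposite_triangle_cface[OF that] unfolding proper_face_colouring_def by simp
    show "col (opposite_triangle p q) \<noteq> col (opposite_triangle p r)"
      if "p \<noteq> q" "p \<noteq> r" "q \<noteq> r" for p q r
      using col opposite_triangle_cface[OF that(1)] opposite_triangle_cface[OF that(2)]
        opposite_triangles_neq[OF that] on_boundary[OF that(1)] on_boundary[OF that(2)]
      unfolding proper_face_colouring_def chambers_two_skeleton by blast
  qed simp_all
qed

end

theorem proposition7p4:
  shows "(\<forall>K f. triangulation_S3 K f \<and> (\<exists>c. proper_vertex_colouring K 5 c) \<longrightarrow>
            (\<exists>col. proper_face_colouring K f 5 col)) \<and>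
         (\<exists>K f. triangulation_S3 K f \<and> (\<exists>c. proper_vertex_colouring K 5 c) \<and>
            \<not> (\<exists>col. proper_face_colouring K f 4 col))"
proof
  show "\<forall>K f. triangulation_S3 K f \<and> (\<exists>c. proper_vertex_colouring K 5 c) \<longrightarrow>
            (\<exists>col. proper_face_colouring K f 5 col)"
    using proper_face_colouring_vertex_sum[of 5] by auto
  obtain F G where "hyperplane_chart F G" using ex_hyperplane_chart by blast
  then interpret hyperplane_chart F G .
  show "\<exists>K f. triangulation_S3 K f \<and> (\<exists>c. proper_vertex_colouring K 5 c) \<and>
            \<not> (\<exists>col. proper_face_colouring K f 4 col)"
    using triangulation_two_skeleton proper_vertex_colouring_two_skeleton
      not_4_face_colourable_two_skeleton by blast
qed

end
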